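(* In the known-variance setup, let $p'_{ZS}(r)=\frac{\Gamma((K+1)/2)}{\Gamma(K/2)\Gamma(1/2)}\frac{2r^{K-1}}{(1+r^2)^{(K+1)/2}}$ for $r>0$. Then $$\int_0^\infty p(\mathbf y\mid r)\,p'_{ZS}(r)\,dr=\frac{C_\sigma\,e^{-N\langle\mathbf z^2\rangle/2}}{\sqrt\pi}\,\Gamma\!\left(\frac{K+1}{2}\right)\sum_{j=0}^\infty\frac1{j!}\left(\frac{N^2\hat b^2}{4}\right)^{j}U\!\left(\frac K2+j;\frac12+j;\frac N2\right).$$
   Context: Known-variance setup: known $\sigma_1,\dots,\sigma_N>0$; $z_n=y_n/\sigma_n$; $\mathbb X\in\mathbb R^{N\times K}$ with entries $X_k(c_n)/\sigma_n$, full column rank. $\langle\mathbf z^2\rangle=\mathbf z^T\mathbf z/N$, $\mathbb H=\mathbb X^T\mathbb X/N=\mathbb S\mathbb L\mathbb S^T$, $\mathbf h=\mathbb X^T\mathbf z/N$, $\hat{\mathbf b}=\mathbb L^{1/2}\mathbb S^T\mathbb H^{-1}\mathbf h$, $\hat b^2=\|\hat{\mathbf b}\|^2$, $C_\sigma=\prod_n(2\pi\sigma_n^2)^{-1/2}$. Likelihood $p(\mathbf y\mid\mathbf b)=C_\sigma\exp[-\tfrac N2(\langle\mathbf z^2\rangle+\|\mathbf b\|^2-2\hat{\mathbf b}^T\mathbf b)]$; $p(\mathbf y\mid r)=\int p(\mathbf y\mid\mathbf b)d\mu_r(\mathbf b)$ with $\mu_r$ the uniform probability measure on the radius-$r$ sphere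 of $\mathbb R^K$. $U(\alpha;\beta;x)=\frac1{\Gamma(\alpha)}\int_0^\infty e^{-xt}t^{\alpha-1}(1+t)^{\beta-\alpha-1}dt$. *)

theory Defs
  imports "HOL-Analysis.Analysis"
begin

text \<open>Known-variance setup. Index type 'n for the N data points, 'k for the K basis
functions; N = CARD('n), K = CARD('k). A $ n $ k is X_k(c_n).\<close>

definition zvec :: "real^'n \<Rightarrow> real^'n \<Rightarrow> real^'n" where
  "zvec sg y = (\<chi> n. y $ n / sg $ n)"

definition Xmat :: "real^'n \<Rightarrow> real^'k^'n \<Rightarrow> real^'k^'n" where
  "Xmat sg A = (\<chi> n k. A $ n $ k / sg $ n)"

definition z2mean :: "real^'n \<Rightarrow> real^'n \<Rightarrow> real" where
  "z2mean sg y = (zvec sg y \<bullet> zvec sg y) / real CARD('n)"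

definition Hmat :: "real^'n \<Rightarrow> real^'k^'n \<Rightarrow> real^'k^'k" where
  "Hmat sg A = (1 / real CARD('n)) *\<^sub>R (transpose (Xmat sg A) ** Xmat sg A)"

definition hvec :: "real^'n \<Rightarrow> real^'k^'n \<Rightarrow> real^'n \<Rightarrow> real^'k" where
  "hvec sg A y = (1 / real CARD('n)) *\<^sub>R (transpose (Xmat sg A) *v zvec sg y)"

definition diag_mat :: "real^'k \<Rightarrow> real^'k^'k" where
  "diag_mat lam = (\<chi> i j. if i = j then lam $ i else 0)"

definition bhat :: "real^'n \<Rightarrow> real^'k^'n \<Rightarrow> real^'n \<Rightarrow> real^'k^'k \<Rightarrow> real^'k \<Rightarrow> real^'k" where
  "bhat sg A y S lam =
     (diag_mat (\<chi> i. sqrt (lam $ i)) ** transpose S ** matrix_inv (Hmat sg A)) *v hvec sg A y"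

definition Csigma :: "real^'n \<Rightarrow> real" where
  "Csigma sg = (\<Prod>n\<in>UNIV. 1 / sqrt (2 * pi * (sg $ n)^2))"

definition lik_b :: "real^'n \<Rightarrow> real^'k^'n \<Rightarrow> real^'n \<Rightarrow> real^'k^'k \<Rightarrow> real^'k \<Rightarrow> real^'k \<Rightarrow> real" where
  "lik_b sg A y S lam b = Csigma sg *
     exp (- (real CARD('n) / 2) * (z2mean sg y + (norm b)^2 - 2 * (bhat sg A y S lam \<bullet> b)))"

text \<open>Uniform probability measure on the sphere of radius r in R^K: the image of the
uniform distribution on the unit ball under x \<mapsto> r x / |x|.\<close>
definition sphere_measure :: "real \<Rightarrow> (real^'k) measure" where
  "sphere_measure r = distr (uniform_measure lborel (ball 0 1)) borel (\<lambda>x. r *\<^sub>R (x /\<^sub>R norm x))"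

definition lik_r :: "real^'n \<Rightarrow> real^'k^'n \<Rightarrow> real^'n \<Rightarrow> real^'k^'k \<Rightarrow> real^'k \<Rightarrow> real \<Rightarrow> real" where
  "lik_r sg A y S lam r = (\<integral>b. lik_b sg A y S lam b \<partial>(sphere_measure r :: (real^'k) measure))"

definition hyperU :: "real \<Rightarrow> real \<Rightarrow> real \<Rightarrow> real" where
  "hyperU a b x = (1 / Gamma a) *
     (LBINT t:{0<..}. exp (- x * t) * t powr (a - 1) * (1 + t) powr (b - a - 1))"

definition pZS :: "nat \<Rightarrow> real \<Rightarrow> real" where
  "pZS K r = Gamma ((real K + 1) / 2) / (Gamma (real K / 2) * Gamma (1 / 2)) *
     (2 * r ^ (K - 1) / (1 + r^2) powr ((real K + 1) / 2))"

end

theory Submission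
  imports Defs "HOL-Probability.Probability"
begin

(* Write u for the uniform random direction in R^K and b for bhat; the
   uniform measure on the sphere is the image of the uniform measure on the unit ball under
   x |-> r sgn x, so sphere averages are ball integrals.  The likelihood on the sphere of
   radius r factorises as
     lik_r r = C_sigma e^{-N<z^2>/2} e^{-N r^2/2} E[exp (N r (b . u))],
   and the directional exponential average is the series
     E[exp (a (b . u))] = sum_j (a |b| / 2)^(2j) Gamma(K/2) / (j! Gamma(K/2 + j)).
   Its coefficients are the even directional moments E[(b . u)^(2j)]; they are obtained by
   computing the Gaussian moments of the linear form b . x in two ways: from the
   cosh generating function (uniqueness of power series with nonnegative coefficients)
   and by polar decomposition (directional moment times a radial Gamma integral).
   Integrating the series term by term against the prior, the substitution t = r^2 turns
   each radial integral into Gamma(K/2+j) U(K/2+j; 1/2+j; N/2); the interchange of sum and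
   integral is monotone convergence in ennreal, and summability of the resulting series
   follows from the bound U(a;b;x) <= x^(-a). *)

lemma sets_borel_ball[measurable]: "ball (c::'a::metric_space) r \<in> sets borel"
  by simp


lemma measure_eqI_Iio:
  fixes M N :: "real measure"
  assumes sets: "sets M = sets borel" "sets N = sets borel"
  and fin: "\<And>a. emeasure M {..<a} < \<infinity>"
  and eq: "\<And>a. emeasure M {..<a} = emeasure N {..<a}"
  shows "M = N"
proof (rule measure_eqI_generator_eq[where E="range lessThan" and \<Omega>=UNIV and A="\<lambda>i. {..<real i}"])
  show "Int_stable (range lessThan :: real set set)"
  proof (clarsimp simp: Int_stable_def)
    fix a b :: real
    have "{..<a} \<inter> {..<b} = {..<min a b}" by auto
    then show "{..<a} \<inter> {..<b} \<in> range lessThan" by blast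
  qed
  show "sets M = sigma_sets UNIV (range lessThan)" "sets N = sigma_sets UNIV (range lessThan)"
    unfolding sets borel_Iio by simp_all
  show "(\<Union>i. {..<real i}) = UNIV"
    by (auto intro: reals_Archimedean2)
qed (use fin eq in \<open>auto simp: less_top\<close>)

lemma nn_integral_lborel_scale:
  fixes f :: "'a::euclidean_space \<Rightarrow> ennreal"
  assumes [measurable]: "f \<in> borel_measurable borel" and c: "c \<noteq> 0"
  shows "(\<integral>\<^sup>+x. f x \<partial>lborel) = ennreal (\<bar>c\<bar>^DIM('a)) * (\<integral>\<^sup>+x. f (c *\<^sub>R x) \<partial>lborel)"
proof -
  have "(\<integral>\<^sup>+x. f x \<partial>lborel) =
      (\<integral>\<^sup>+x. f x \<partial>density (distr lborel borel (\<lambda>x. 0 + c *\<^sub>R x)) (\<lambda>_. \<bar>c\<bar>^DIM('a)))"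
    using lborel_affine[OF c, of "0::'a"] by simp
  also have "\<dots> = (\<integral>\<^sup>+x. ennreal (\<bar>c\<bar>^DIM('a)) * f (c *\<^sub>R x) \<partial>lborel)"
    by (simp add: nn_integral_density nn_integral_distr)
  also have "\<dots> = ennreal (\<bar>c\<bar>^DIM('a)) * (\<integral>\<^sup>+x. f (c *\<^sub>R x) \<partial>lborel)"
    by (simp add: nn_integral_cmult)
  finally show ?thesis .
qed

lemma nn_integral_homogeneous_ball:
  fixes g :: "'a::euclidean_space \<Rightarrow> ennreal"
  assumes [measurable]: "g \<in> borel_measurable borel"
  and hom: "\<And>c x. c > 0 \<Longrightarrow> g (c *\<^sub>R x) = g x" and a: "a > 0"
  shows "(\<integral>\<^sup>+ x. g x * indicator (ball 0 a) x \<partial>lborel) =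
    ennreal (a^DIM('a)) * (\<integral>\<^sup>+ x. g x * indicator (ball 0 1) x \<partial>lborel)"
proof -
  have ball: "indicator (ball 0 a) (a *\<^sub>R x) = (indicator (ball 0 1) x :: ennreal)" for x :: 'a
    using a by (auto simp: indicator_def)
  have "(\<integral>\<^sup>+ x. g x * indicator (ball 0 a) x \<partial>lborel) =
      ennreal (\<bar>a\<bar>^DIM('a)) * (\<integral>\<^sup>+ x. g (a *\<^sub>R x) * indicator (ball 0 a) (a *\<^sub>R x) \<partial>lborel)"
    by (rule nn_integral_lborel_scale) (use a in auto)
  then show ?thesis
    using a by (simp add: hom ball)
qed

lemma nn_integral_power_density_Iio:
  assumes D: "D \<ge> 1"
  shows "(\<integral>\<^sup>+ r. ennreal (real D * r^(D-1)) * indicator {0..} r * indicator {..<a} r \<partial>lborel) =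
    (if a \<le> 0 then 0 else ennreal (a^D))"
proof (cases "a \<le> 0")
  case True
  then have "ennreal (real D * r^(D-1)) * indicator {0..} r * indicator {..<a} r = 0" for r :: real
    by (auto simp: indicator_def)
  then have "(\<integral>\<^sup>+ r. ennreal (real D * r^(D-1)) * indicator {0..} r * indicator {..<a} r \<partial>lborel) = 0"
    by (subst nn_integral_0_iff_AE) auto
  then show ?thesis using True by simp
next
  case False
  have "(\<integral>\<^sup>+ r. ennreal (real D * r^(D-1)) * indicator {0..} r * indicator {..<a} r \<partial>lborel) =
      (\<integral>\<^sup>+ r. ennreal (real D * r^(D-1)) * indicator {0..a} r \<partial>lborel)"
    by (intro nn_integral_cong_AE, use AE_lborel_singleton[of a] in eventually_elim)
       (auto simp: indicator_def)
  also have "\<dots> = a^D - 0^D"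
    using False D
    by (intro nn_integral_FTC_Icc[where F="\<lambda>r. r^D"]) (auto intro!: derivative_eq_intros)
  finally show ?thesis using False D by (simp add: zero_power)
qed

lemma distr_norm_homogeneous_density:
  fixes g :: "'a::euclidean_space \<Rightarrow> ennreal"
  assumes [measurable]: "g \<in> borel_measurable borel"
  and hom: "\<And>c x. c > 0 \<Longrightarrow> g (c *\<^sub>R x) = g x"
  and fin: "(\<integral>\<^sup>+ x. g x * indicator (ball 0 1) x \<partial>lborel) < \<infinity>"
  shows "distr (density lborel g) borel norm = density lborel
    (\<lambda>r. (\<integral>\<^sup>+ x. g x * indicator (ball 0 1) x \<partial>lborel) *
         (ennreal (real DIM('a) * r^(DIM('a)-1)) * indicator {0..} r))"
proof -
  define I where "I = (\<integral>\<^sup>+ x. g x * indicator (ball 0 1) x \<partial>lborel)"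
  define d where "d r = ennreal (real DIM('a) * r^(DIM('a)-1)) * indicator {0..} r" for r :: real
  define M1 where "M1 = distr (density lborel g) borel (norm :: 'a \<Rightarrow> real)"
  define M2 where "M2 = density lborel (\<lambda>r. I * d r)"
  have [measurable]: "d \<in> borel_measurable borel" unfolding d_def by measurable
  have D: "DIM('a) \<ge> 1" using DIM_positive[where 'a='a] by linarith
  have dist1: "emeasure M1 {..<a} = (if a \<le> 0 then 0 else I * ennreal (a^DIM('a)))" for a
  proof -
    have "emeasure M1 {..<a} = emeasure (density lborel g) (norm -` {..<a})"
      unfolding M1_def by (subst emeasure_distr) auto
    also have "norm -` {..<a} = ball (0::'a) a" by auto
    also have "emeasure (density lborel g) (ball 0 a) = (\<integral>\<^sup>+ x. g x * indicator (ball 0 a) x \<partial>lborel)"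
      by (subst emeasure_density) auto
    also have "\<dots> = (if a \<le> 0 then 0 else I * ennreal (a^DIM('a)))"
    proof (cases "a \<le> 0")
      case True
      then show ?thesis by (subst ball_empty) auto
    next
      case False
      then show ?thesis
        unfolding I_def by (subst nn_integral_homogeneous_ball[OF _ hom]) (auto simp: mult.commute)
    qed
    finally show ?thesis .
  qed
  have dist2: "emeasure M2 {..<a} = (if a \<le> 0 then 0 else I * ennreal (a^DIM('a)))" for a
  proof -
    have "emeasure M2 {..<a} = (\<integral>\<^sup>+ r. I * (d r * indicator {..<a} r) \<partial>lborel)"
      unfolding M2_def by (subst emeasure_density) (auto simp: mult.assoc)
    also have "\<dots> = I * (\<integral>\<^sup>+ r. d r * indicator {..<a} r \<partial>lborel)"
      by (rule nn_integral_cmult) measurable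
    also have "(\<integral>\<^sup>+ r. d r * indicator {..<a} r \<partial>lborel) = (if a \<le> 0 then 0 else ennreal (a^DIM('a)))"
      unfolding d_def by (rule nn_integral_power_density_Iio[OF D])
    finally show ?thesis by simp
  qed
  have "M1 = M2"
  proof (rule measure_eqI_Iio)
    show "sets M1 = sets borel" "sets M2 = sets borel" unfolding M1_def M2_def by auto
    show "emeasure M1 {..<a} < \<infinity>" for a
      using fin unfolding dist1 I_def by (auto simp: ennreal_mult_less_top)
    show "emeasure M1 {..<a} = emeasure M2 {..<a}" for a unfolding dist1 dist2 ..
  qed
  then show ?thesis unfolding M1_def M2_def I_def d_def .
qed

lemma nn_integral_polar:
  fixes g :: "'a::euclidean_space \<Rightarrow> ennreal" and h :: "real \<Rightarrow> ennreal"
  assumes [measurable]: "g \<in> borel_measurable borel" "h \<in> borel_measurable borel"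
  and hom: "\<And>c x. c > 0 \<Longrightarrow> g (c *\<^sub>R x) = g x"
  and fin: "(\<integral>\<^sup>+ x. g x * indicator (ball 0 1) x \<partial>lborel) < \<infinity>"
  shows "(\<integral>\<^sup>+ x. g x * h (norm x) \<partial>lborel) =
    (\<integral>\<^sup>+ x. g x * indicator (ball 0 1) x \<partial>lborel) *
    (\<integral>\<^sup>+ r. h r * ennreal (real DIM('a) * r^(DIM('a)-1)) * indicator {0..} r \<partial>lborel)"
proof -
  define I where "I = (\<integral>\<^sup>+ x. g x * indicator (ball 0 1) x \<partial>lborel)"
  define M where "M = distr (density lborel g) borel (norm :: 'a \<Rightarrow> real)"
  have M: "M = density lborel (\<lambda>r. I * (ennreal (real DIM('a) * r^(DIM('a)-1)) * indicator {0..} r))"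
    unfolding I_def M_def by (rule distr_norm_homogeneous_density[OF assms(1) hom fin])
  have "(\<integral>\<^sup>+ x. g x * h (norm x) \<partial>lborel) = (\<integral>\<^sup>+ r. h r \<partial>M)"
    unfolding M_def by (simp add: nn_integral_distr nn_integral_density mult.commute)
  also have "\<dots> = (\<integral>\<^sup>+ r. I * (h r * ennreal (real DIM('a) * r^(DIM('a)-1)) * indicator {0..} r) \<partial>lborel)"
    unfolding M by (subst nn_integral_density) (auto intro!: nn_integral_cong simp: mult_ac)
  also have "\<dots> = I * (\<integral>\<^sup>+ r. h r * ennreal (real DIM('a) * r^(DIM('a)-1)) * indicator {0..} r \<partial>lborel)"
    by (rule nn_integral_cmult) measurable
  finally show ?thesis unfolding I_def .
qed


lemma nn_integral_square_below:
  "(\<integral>\<^sup>+ r. ennreal (2*r) * indicator {0<..} r * indicator ((\<lambda>r::real. r^2) -` {..<a}) r \<partial>lborel) =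
    (if a \<le> 0 then 0 else ennreal a)"
proof (cases "a \<le> 0")
  case True
  then have "ennreal (2*r) * indicator {0<..} r * indicator ((\<lambda>r::real. r^2) -` {..<a}) r = 0" for r
    by (auto simp: indicator_def) (metis not_less order.trans zero_le_power2)
  then have "(\<integral>\<^sup>+ r. ennreal (2*r) * indicator {0<..} r * indicator ((\<lambda>r::real. r^2) -` {..<a}) r \<partial>lborel) = 0"
    by (subst nn_integral_0_iff_AE) auto
  then show ?thesis using True by simp
next
  case False
  have "(\<integral>\<^sup>+ r. ennreal (2*r) * indicator {0<..} r * indicator ((\<lambda>r::real. r^2) -` {..<a}) r \<partial>lborel)
      = (\<integral>\<^sup>+ r. ennreal (2*r) * indicator {0..sqrt a} r \<partial>lborel)"
  proof (intro nn_integral_cong_AE, use AE_lborel_singleton[of "sqrt a"] AE_lborel_singleton[of 0] in eventually_elim)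
    case (elim r)
    have "(0 < r \<and> r^2 < a) \<longleftrightarrow> (0 \<le> r \<and> r \<le> sqrt a)"
    proof
      assume "0 < r \<and> r^2 < a" then show "0 \<le> r \<and> r \<le> sqrt a"
        using real_less_rsqrt by fastforce
    next
      assume h: "0 \<le> r \<and> r \<le> sqrt a"
      then have "r < sqrt a" using elim by auto
      then have "r^2 < (sqrt a)^2" using h by (intro power_strict_mono) auto
      then show "0 < r \<and> r^2 < a" using h elim False by auto
    qed
    then show ?case by (auto simp: indicator_def)
  qed
  also have "\<dots> = (sqrt a)^2 - 0^2"
    using False by (intro nn_integral_FTC_Icc[where F="\<lambda>r. r^2"]) (auto intro!: derivative_eq_intros)
  finally show ?thesis using False by simp
qed

lemma nn_integral_subst_square:
  fixes f :: "real \<Rightarrow> ennreal"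
  assumes [measurable]: "f \<in> borel_measurable borel"
  shows "(\<integral>\<^sup>+ r. f (r^2) * ennreal (2*r) * indicator {0<..} r \<partial>lborel) =
         (\<integral>\<^sup>+ t. f t * indicator {0<..} t \<partial>lborel)"
proof -
  define M1 where "M1 = distr (density lborel (\<lambda>r. ennreal (2*r) * indicator {0<..} r)) borel (\<lambda>r::real. r^2)"
  define M2 where "M2 = density lborel (indicator {0<..} :: real \<Rightarrow> ennreal)"
  have dist1: "emeasure M1 {..<a} = (if a \<le> 0 then 0 else ennreal a)" for a
  proof -
    have [measurable]: "(\<lambda>r::real. r^2) -` {..<a} \<in> sets borel"
      by (rule measurable_sets_borel[of "\<lambda>r. r^2" borel]) auto
    have "emeasure M1 {..<a} = (\<integral>\<^sup>+ r. ennreal (2*r) * indicator {0<..} r *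
        indicator ((\<lambda>r::real. r^2) -` {..<a}) r \<partial>lborel)"
      unfolding M1_def by (subst emeasure_distr) (auto simp: emeasure_density)
    then show ?thesis unfolding nn_integral_square_below .
  qed
  have dist2: "emeasure M2 {..<a} = (if a \<le> 0 then 0 else ennreal a)" for a
  proof -
    have "emeasure M2 {..<a} = emeasure lborel ({0<..} \<inter> {..<a})"
      unfolding M2_def by (subst emeasure_density) (auto simp: indicator_inter_arith[symmetric] mult.commute)
    also have "{0<..} \<inter> {..<a} = {0<..<a}" by auto
    finally show ?thesis by simp
  qed
  have "M1 = M2"
  proof (rule measure_eqI_Iio)
    show "sets M1 = sets borel" "sets M2 = sets borel" unfolding M1_def M2_def by auto
    show "emeasure M1 {..<a} < \<infinity>" for a unfolding dist1 by auto
    show "emeasure M1 {..<a} = emeasure M2 {..<a}" for a unfolding dist1 dist2 ..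
  qed
  have "(\<integral>\<^sup>+ r. f (r^2) * ennreal (2*r) * indicator {0<..} r \<partial>lborel) = (\<integral>\<^sup>+ t. f t \<partial>M1)"
    unfolding M1_def by (simp add: nn_integral_distr nn_integral_density mult_ac)
  also have "\<dots> = (\<integral>\<^sup>+ t. f t \<partial>M2)" using \<open>M1 = M2\<close> by simp
  also have "\<dots> = (\<integral>\<^sup>+ t. f t * indicator {0<..} t \<partial>lborel)"
    unfolding M2_def by (simp add: nn_integral_density mult.commute)
  finally show ?thesis .
qed

section \<open>Gamma and Gaussian integrals\<close>

lemma nn_integral_Gamma_rate:
  fixes s c :: real
  assumes s: "s > 0" and c: "c > 0"
  shows "(\<integral>\<^sup>+ t. ennreal (t powr (s-1) * exp (-(c*t))) * indicator {0<..} t \<partial>lborel) =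
    ennreal (Gamma s / c powr s)"
proof -
  define h where "h = (\<lambda>t::real. ennreal (t powr (s-1) * exp (-(c*t))) * indicator {0<..} t)"
  have [measurable]: "h \<in> borel_measurable borel" unfolding h_def by measurable
  have rescaled: "h (0 + (1/c) * x) =
      ennreal (c powr (1-s)) * ennreal (indicator {0..} x * x powr (s - 1) / exp x)" for x :: real
  proof (cases "x > 0")
    case True
    have "(x/c) powr (s-1) = c powr (1-s) * x powr (s-1)"
      using True c by (simp add: powr_divide powr_minus_divide powr_diff divide_simps)
    then show ?thesis using True c
      by (simp add: h_def ennreal_mult'[symmetric] exp_minus field_simps)
  next
    case False
    then show ?thesis using c by (auto simp: h_def indicator_def zero_less_divide_iff)
  qed
  have "(\<integral>\<^sup>+ t. h t \<partial>lborel) = ennreal \<bar>1/c\<bar> * (\<integral>\<^sup>+ x. h (0 + (1/c) * x) \<partial>lborel)"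
    by (rule nn_integral_real_affine) (use c in auto)
  also have "(\<integral>\<^sup>+ x. h (0 + (1/c) * x) \<partial>lborel) = ennreal (c powr (1-s)) * Gamma s"
    unfolding rescaled by (subst nn_integral_cmult) (auto simp: Gamma_conv_nn_integral_real[OF s])
  finally have "(\<integral>\<^sup>+ t. h t \<partial>lborel) = ennreal (1/c) * (ennreal (c powr (1-s)) * ennreal (Gamma s))"
    using c by simp
  also have "\<dots> = ennreal (Gamma s / c powr s)"
    using c s Gamma_real_pos[OF s]
    by (simp add: ennreal_mult'[symmetric] powr_diff field_simps)
  finally show ?thesis unfolding h_def .
qed

lemma nn_integral_gauss_linear:
  fixes a :: real
  shows "(\<integral>\<^sup>+ x. ennreal (exp (a*x - x^2/2)) \<partial>lborel) = ennreal (sqrt (2*pi) * exp (a^2/2))"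
proof -
  have eq: "exp (a*x - x^2/2) = sqrt (2*pi) * exp (a^2/2) * normal_density a 1 x" for x
  proof -
    have "a*x - x^2/2 = a^2/2 + (-((x - a)^2)/2)"
      by (simp add: power2_eq_square field_simps)
    then have "exp (a*x - x^2/2) = exp (a^2/2) * exp (-((x - a)^2)/2)"
      by (simp add: exp_add[symmetric])
    then show ?thesis by (simp add: normal_density_def)
  qed
  have "(\<integral>\<^sup>+ x. ennreal (exp (a*x - x^2/2)) \<partial>lborel) =
      (\<integral>\<^sup>+ x. ennreal (sqrt (2*pi) * exp (a^2/2)) * ennreal (normal_density a 1 x) \<partial>lborel)"
    by (intro nn_integral_cong) (simp add: eq ennreal_mult)
  also have "\<dots> = ennreal (sqrt (2*pi) * exp (a^2/2)) * (\<integral>\<^sup>+ x. ennreal (normal_density a 1 x) \<partial>lborel)"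
    by (rule nn_integral_cmult) measurable
  also have "(\<integral>\<^sup>+ x. ennreal (normal_density a 1 x) \<partial>lborel) = 1"
    by (subst nn_integral_eq_integral) auto
  finally show ?thesis by simp
qed

lemma norm_sq_eq_sum_Basis:
  fixes x :: "'a::euclidean_space"
  shows "(norm x)^2 = (\<Sum>e\<in>Basis. (x \<bullet> e)^2)"
  by (simp only: power2_norm_eq_inner) (subst euclidean_inner, simp add: power2_eq_square)

text \<open>The Gaussian moment generating function of a linear form in K dimensions, obtained
  coordinatewise by Fubini.\<close>
lemma nn_integral_gauss_exp_linear:
  fixes b :: "'a::euclidean_space"
  shows "(\<integral>\<^sup>+ x. ennreal (exp (b \<bullet> x - (norm x)^2/2)) \<partial>lborel) =
     ennreal (sqrt (2*pi) ^ DIM('a) * exp ((norm b)^2 / 2))"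
proof -
  have eq: "ennreal (exp (b \<bullet> x - (norm x)^2/2)) =
      (\<Prod>e\<in>Basis. ennreal (exp ((b \<bullet> e) * (x \<bullet> e) - (x \<bullet> e)^2/2)))" for x
  proof -
    have "b \<bullet> x - (norm x)^2/2 = (\<Sum>e\<in>Basis. (b \<bullet> e) * (x \<bullet> e) - (x \<bullet> e)^2/2)"
      unfolding norm_sq_eq_sum_Basis[of x] euclidean_inner[of b x]
      by (simp add: sum_subtractf sum_divide_distrib)
    then show ?thesis by (simp add: exp_sum prod_ennreal)
  qed
  have "(\<integral>\<^sup>+ x. ennreal (exp (b \<bullet> x - (norm x)^2/2)) \<partial>lborel) =
     (\<Prod>e\<in>Basis. (\<integral>\<^sup>+ y. ennreal (exp ((b \<bullet> e) * y - y^2/2)) \<partial>lborel))"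
    unfolding eq by (rule nn_integral_lborel_prod) auto
  also have "\<dots> = ennreal (\<Prod>e\<in>(Basis::'a set). sqrt (2*pi) * exp ((b \<bullet> e)^2/2))"
    by (simp add: nn_integral_gauss_linear prod_ennreal)
  also have "(\<Prod>e\<in>(Basis::'a set). sqrt (2*pi) * exp ((b \<bullet> e)^2/2)) =
      sqrt (2*pi) ^ DIM('a) * exp ((norm b)^2 / 2)"
    unfolding norm_sq_eq_sum_Basis[of b] by (simp add: prod.distrib exp_sum[symmetric] sum_divide_distrib)
  finally show ?thesis .
qed

text \<open>The even version: cosh(b . x) has the same Gaussian integral, by symmetry b \<mapsto> -b.\<close>
lemma nn_integral_gauss_cosh_linear:
  fixes b :: "'a::euclidean_space"
  shows "(\<integral>\<^sup>+ x. ennreal (cosh (b \<bullet> x) * exp (- ((norm x)^2)/2)) \<partial>lborel) =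
     ennreal (sqrt (2*pi) ^ DIM('a) * exp ((norm b)^2 / 2))"
proof -
  define V where "V = sqrt (2*pi) ^ DIM('a) * exp ((norm b)^2 / 2)"
  have V: "V \<ge> 0" unfolding V_def by simp
  have eq: "ennreal (cosh (b \<bullet> x) * exp (- ((norm x)^2)/2)) = ennreal (1/2) *
     (ennreal (exp (b \<bullet> x - (norm x)^2/2)) + ennreal (exp ((-b) \<bullet> x - (norm x)^2/2)))" for x
  proof -
    have plus: "exp (b \<bullet> x - (norm x)^2/2) = exp (b \<bullet> x) * exp (- ((norm x)^2)/2)"
      and minus: "exp ((-b) \<bullet> x - (norm x)^2/2) = exp (- (b \<bullet> x)) * exp (- ((norm x)^2)/2)"
      by (simp_all add: exp_add[symmetric])
    have r: "cosh (b \<bullet> x) * exp (- ((norm x)^2)/2) =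
        (1/2) * (exp (b \<bullet> x - (norm x)^2/2) + exp ((-b) \<bullet> x - (norm x)^2/2))"
      unfolding plus minus cosh_def by (simp add: algebra_simps)
    show ?thesis unfolding r by (subst ennreal_mult) auto
  qed
  have "(\<integral>\<^sup>+ x. ennreal (cosh (b \<bullet> x) * exp (- ((norm x)^2)/2)) \<partial>lborel) =
      ennreal (1/2) * (ennreal V + ennreal V)"
    using nn_integral_gauss_exp_linear[of b] nn_integral_gauss_exp_linear[of "-b"]
    unfolding eq V_def by (subst nn_integral_cmult) (auto simp: nn_integral_add)
  also have "\<dots> = ennreal V"
    using V by (simp only: ennreal_plus[symmetric] ennreal_mult[symmetric]) simp
  finally show ?thesis unfolding V_def .
qed


section \<open>Power series with nonnegative terms\<close>

lemma cosh_series_ennreal: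
  fixes y :: real
  shows "ennreal (cosh y) = (\<Sum>j. ennreal (y^(2*j) / fact (2*j)))"
proof -
  have "(\<lambda>n. if even n then y ^ n /\<^sub>R fact n else 0) sums cosh y" by (rule cosh_converges)
  then have "(\<lambda>j. (\<lambda>n. if even n then y ^ n /\<^sub>R fact n else 0) (2*j)) sums cosh y"
    by (subst sums_mono_reindex) (auto simp: strict_mono_def)
  then have "(\<lambda>j. y^(2*j) / fact (2*j)) sums cosh y" by (simp add: divide_inverse mult.commute)
  then show ?thesis
    by (intro suminf_ennreal_eq[symmetric]) auto
qed

lemma exp_series_ennreal:
  fixes y :: real
  assumes "y \<ge> 0"
  shows "ennreal (exp y) = (\<Sum>j. ennreal (y^j / fact j))"
proof -
  have "(\<lambda>n. y ^ n /\<^sub>R fact n) sums exp y" by (rule exp_converges)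
  then show ?thesis using assms
    by (intro suminf_ennreal_eq[symmetric]) (auto simp: divide_inverse mult.commute)
qed

text \<open>A power series converging and vanishing on [0,\<infinity>) has zero coefficients: by
  induction, the series with the first n coefficients removed is continuous at 0 and vanishes
  to the right of 0.\<close>
lemma powser_vanishing_on_nonneg:
  fixes e :: "nat \<Rightarrow> real"
  assumes se: "\<And>x. x \<ge> 0 \<Longrightarrow> summable (\<lambda>j. e j * x^j)"
  and sz: "\<And>x. x \<ge> 0 \<Longrightarrow> (\<Sum>j. e j * x^j) = 0"
  shows "e n = 0"
proof (induction n rule: less_induct)
  case (less n)
  define g where "g x = (\<Sum>j. e (j+n) * x^j)" for x :: real
  have gx: "g x = 0" if x: "x > 0" for x
  proof -
    have shifted: "summable (\<lambda>j. e (j+n) * x^j)"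
    proof -
      have "summable (\<lambda>j. e (j+n) * x^(j+n))"
        using summable_ignore_initial_segment[OF se[of x], of n] x by simp
      then have "summable (\<lambda>j. (e (j+n) * x^(j+n)) / x^n)" by (rule summable_divide)
      then show ?thesis using x by (simp add: power_add)
    qed
    have "0 = (\<Sum>j. e j * x^j)" using sz x by simp
    also have "\<dots> = (\<Sum>j. e (j+n) * x^(j+n)) + (\<Sum>i<n. e i * x^i)"
      using se x by (intro suminf_split_initial_segment) auto
    also have "(\<Sum>i<n. e i * x^i) = 0" using less by simp
    also have "(\<Sum>j. e (j+n) * x^(j+n)) = g x * x^n"
      unfolding g_def using shifted by (subst suminf_mult2) (auto simp: power_add mult_ac)
    finally show ?thesis using x by simp
  qed
  have "summable (\<lambda>j. e (j+n) * 1^j)"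
    using summable_ignore_initial_segment[OF se[of 1], of n] by simp
  then have "isCont g 0"
    unfolding g_def by (rule isCont_powser) simp
  then have "(g \<longlongrightarrow> g 0) (at_right 0)"
    unfolding isCont_def by (rule tendsto_within_subset) simp
  moreover have "(g \<longlongrightarrow> 0) (at_right 0)"
    by (rule tendsto_eventually) (use eventually_at_right_less[of "0::real"] gx in \<open>auto elim: eventually_mono\<close>)
  ultimately have "g 0 = 0" using tendsto_unique[of "at_right (0::real)"] by auto
  then show ?case by (simp add: g_def)
qed

lemma powser_unique_ennreal:
  fixes a d :: "nat \<Rightarrow> real"
  assumes a: "\<And>j. a j \<ge> 0" and d: "\<And>j. d j \<ge> 0"
  and sd: "\<And>x. x \<ge> 0 \<Longrightarrow> summable (\<lambda>j. d j * x^j)"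
  and eq: "\<And>x. x \<ge> 0 \<Longrightarrow> (\<Sum>j. ennreal (a j * x^j)) = (\<Sum>j. ennreal (d j * x^j))"
  shows "a = d"
proof -
  have sa: "summable (\<lambda>j. a j * x^j)" if x: "x \<ge> 0" for x
  proof (rule summable_suminf_not_top)
    show "0 \<le> a j * x^j" for j using a x by simp
    show "(\<Sum>j. ennreal (a j * x^j)) \<noteq> \<top>"
      unfolding eq[OF x] using sd[OF x] d x by (intro ennreal_suminf_neq_top) auto
  qed
  have req: "(\<Sum>j. a j * x^j) = (\<Sum>j. d j * x^j)" if x: "x \<ge> 0" for x
  proof -
    have "ennreal (\<Sum>j. a j * x^j) = (\<Sum>j. ennreal (a j * x^j))"
      by (rule suminf_ennreal2[symmetric]) (use a x sa[OF x] in auto)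
    also have "\<dots> = (\<Sum>j. ennreal (d j * x^j))" by (rule eq[OF x])
    also have "\<dots> = ennreal (\<Sum>j. d j * x^j)"
      by (rule suminf_ennreal2) (use d x sd[OF x] in auto)
    finally show ?thesis
      using a d x sa[OF x] sd[OF x] by (subst (asm) ennreal_inj) (auto intro!: suminf_nonneg)
  qed
  have "a n - d n = 0" for n
  proof (rule powser_vanishing_on_nonneg)
    show "summable (\<lambda>j. (a j - d j) * x^j)" if "x \<ge> 0" for x
      unfolding left_diff_distrib using sa[OF that] sd[OF that] by (rule summable_diff)
    show "(\<Sum>j. (a j - d j) * x^j) = 0" if "x \<ge> 0" for x
      unfolding left_diff_distrib using sa[OF that] sd[OF that] req[OF that]
      by (subst suminf_diff[symmetric]) auto
  qed
  then show ?thesis by auto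
qed


section \<open>Gaussian and directional moments of a linear form\<close>

definition gauss_moment :: "'a::euclidean_space \<Rightarrow> nat \<Rightarrow> ennreal" where
  "gauss_moment b j = (\<integral>\<^sup>+ x. ennreal ((b \<bullet> x)^(2*j) * exp (- ((norm x)^2)/2)) \<partial>lborel)"

text \<open>Their generating function is the Gaussian integral of cosh(c (b . x)).\<close>
lemma gauss_moment_generating:
  fixes b :: "'a::euclidean_space" and c :: real
  shows "(\<Sum>j. ennreal (c^(2*j) / fact (2*j)) * gauss_moment b j) =
    ennreal (sqrt (2*pi) ^ DIM('a) * exp (c^2 * (norm b)^2 / 2))"
proof -
  have series: "ennreal (cosh (c * (b \<bullet> x)) * exp (- ((norm x)^2)/2)) =
      (\<Sum>j. ennreal (c^(2*j) / fact (2*j)) * ennreal ((b \<bullet> x)^(2*j) * exp (- ((norm x)^2)/2)))" for x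
  proof -
    have "ennreal (cosh (c * (b \<bullet> x)) * exp (- ((norm x)^2)/2)) =
        ennreal (cosh (c * (b \<bullet> x))) * ennreal (exp (- ((norm x)^2)/2))"
      by (rule ennreal_mult) auto
    also have "\<dots> = (\<Sum>j. ennreal ((c * (b \<bullet> x))^(2*j) / fact (2*j)) * ennreal (exp (- ((norm x)^2)/2)))"
      unfolding cosh_series_ennreal by simp
    also have "\<dots> = (\<Sum>j. ennreal (c^(2*j) / fact (2*j)) * ennreal ((b \<bullet> x)^(2*j) * exp (- ((norm x)^2)/2)))"
      by (intro suminf_cong) (simp add: ennreal_mult[symmetric] power_mult_distrib power_mult mult_ac)
    finally show ?thesis .
  qed
  have "ennreal (sqrt (2*pi) ^ DIM('a) * exp (c^2 * (norm b)^2 / 2)) =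
      (\<integral>\<^sup>+ x. ennreal (cosh (c * (b \<bullet> x)) * exp (- ((norm x)^2)/2)) \<partial>lborel)"
    using nn_integral_gauss_cosh_linear[of "c *\<^sub>R b"] by (simp add: power_mult_distrib)
  also have "\<dots> = (\<Sum>j. (\<integral>\<^sup>+ x. ennreal (c^(2*j) / fact (2*j)) *
      ennreal ((b \<bullet> x)^(2*j) * exp (- ((norm x)^2)/2)) \<partial>lborel))"
    unfolding series by (rule nn_integral_suminf) measurable
  also have "\<dots> = (\<Sum>j. ennreal (c^(2*j) / fact (2*j)) * gauss_moment b j)"
    unfolding gauss_moment_def by (intro suminf_cong nn_integral_cmult) measurable
  finally show ?thesis ..
qed

text \<open>Comparing coefficients with the exponential series: the classical formula
  \<integral> (b . x)^(2j) e^(-|x|^2/2) dx = (2\<pi>)^(K/2) (2j)! (|b|^2/2)^j / j!.\<close>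
lemma gauss_moment_eq:
  fixes b :: "'a::euclidean_space"
  shows "gauss_moment b j = ennreal (sqrt (2*pi) ^ DIM('a) * fact (2*j) * ((norm b)^2/2)^j / fact j)"
proof -
  define G where "G = sqrt (2*pi) ^ DIM('a)"
  have G: "G \<ge> 0" unfolding G_def by simp
  have fin: "gauss_moment b j < \<infinity>" for j
  proof -
    define F where "F j = ennreal (1^(2*j) / fact (2*j)) * gauss_moment b j" for j
    have "(\<Sum>i\<in>{j}. F i) \<le> suminf F" by (rule sum_le_suminf) (auto intro: summableI)
    then have "ennreal (1 / fact (2*j)) * gauss_moment b j \<le>
        (\<Sum>j. ennreal (1^(2*j) / fact (2*j)) * gauss_moment b j)"
      unfolding F_def by simp
    also have "\<dots> < \<infinity>" unfolding gauss_moment_generating by simp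
    finally show ?thesis by (auto simp: ennreal_mult_less_top)
  qed
  define a where "a j = enn2real (gauss_moment b j) / fact (2*j)" for j
  define d where "d j = G * ((norm b)^2/2)^j / fact j" for j
  have moment: "gauss_moment b j = ennreal (a j * fact (2*j))" for j
    unfolding a_def using fin[of j] by (simp add: less_top)
  have "a = d"
  proof (rule powser_unique_ennreal)
    show "a j \<ge> 0" for j unfolding a_def by simp
    show "d j \<ge> 0" for j unfolding d_def using G by simp
    have d_exp: "d j * x^j = G * (((norm b)^2/2 * x)^j / fact j)" for j x
      unfolding d_def power_mult_distrib by (simp add: field_simps)
    show "summable (\<lambda>j. d j * x^j)" for x
      unfolding d_exp using summable_exp[of "(norm b)^2/2*x"]
      by (intro summable_mult) (simp only: divide_inverse_commute)
    show "(\<Sum>j. ennreal (a j * x^j)) = (\<Sum>j. ennreal (d j * x^j))" if x: "x \<ge> 0" for x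
    proof -
      have "(\<Sum>j. ennreal (a j * x^j)) = (\<Sum>j. ennreal ((sqrt x)^(2*j) / fact (2*j)) * gauss_moment b j)"
        unfolding moment using x
        by (intro suminf_cong) (simp add: a_def ennreal_mult[symmetric] power_mult real_sqrt_pow2)
      also have "\<dots> = ennreal G * ennreal (exp ((norm b)^2 / 2 * x))"
        unfolding gauss_moment_generating G_def using x by (simp add: ennreal_mult[symmetric] mult_ac)
      also have "ennreal (exp ((norm b)^2 / 2 * x)) = (\<Sum>j. ennreal (((norm b)^2 / 2 * x)^j / fact j))"
        using x by (intro exp_series_ennreal) simp
      also have "ennreal G * \<dots> = (\<Sum>j. ennreal G * ennreal (((norm b)^2 / 2 * x)^j / fact j))"
        by simp
      also have "\<dots> = (\<Sum>j. ennreal (d j * x^j))"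
        unfolding d_exp using G x by (intro suminf_cong) (simp add: ennreal_mult[symmetric])
      finally show ?thesis .
    qed
  qed
  then show ?thesis
    unfolding moment by (simp add: a_def d_def G_def fun_eq_iff)
qed


text \<open>Even directional moments of b . u, u = x/|x|, integrated over the unit ball (so that
  ball_moment b 0 is the volume of the ball), and the matching radial Gaussian moments.\<close>
definition ball_moment :: "'a::euclidean_space \<Rightarrow> nat \<Rightarrow> ennreal" where
  "ball_moment b j = (\<integral>\<^sup>+ x. ennreal ((b \<bullet> sgn x)^(2*j)) * indicator (ball 0 1) x \<partial>lborel)"

definition radial_moment :: "nat \<Rightarrow> nat \<Rightarrow> ennreal" where
  "radial_moment D j =
    (\<integral>\<^sup>+ r. ennreal (r^(2*j) * exp (- (r^2)/2)) * ennreal (real D * r^(D-1)) * indicator {0..} r \<partial>lborel)"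

lemma ball_moment_0: "ball_moment (b::'a::euclidean_space) 0 = emeasure lborel (ball (0::'a) 1)"
  by (simp add: ball_moment_def)

text \<open>|b . u| \<le> |b|, so every directional moment is finite.\<close>
lemma ball_moment_finite: "ball_moment (b::'a::euclidean_space) j < \<infinity>"
proof -
  have "ball_moment b j \<le> (\<integral>\<^sup>+ x. ennreal ((norm b)^(2*j)) * indicator (ball (0::'a) 1) x \<partial>lborel)"
    unfolding ball_moment_def
  proof (rule nn_integral_mono)
    fix x :: 'a
    have "\<bar>b \<bullet> sgn x\<bar> \<le> norm b * norm (sgn x)" by (rule Cauchy_Schwarz_ineq2)
    also have "\<dots> \<le> norm b" by (simp add: norm_sgn)
    finally have "\<bar>b \<bullet> sgn x\<bar>^(2*j) \<le> (norm b)^(2*j)" by (intro power_mono) auto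
    then show "ennreal ((b \<bullet> sgn x)^(2*j)) * indicator (ball 0 1) x \<le>
        ennreal ((norm b)^(2*j)) * indicator (ball 0 1) x"
      by (intro mult_right_mono ennreal_leI) (auto simp: power_even_abs)
  qed
  also have "\<dots> = ennreal ((norm b)^(2*j)) * emeasure lborel (ball (0::'a) 1)"
    by (simp add: nn_integral_cmult_indicator)
  also have "\<dots> < \<infinity>"
    using emeasure_lborel_ball_finite[of "0::'a" 1] by (simp add: ennreal_mult_less_top)
  finally show ?thesis .
qed

text \<open>Polar decomposition of the Gaussian moments, since b . x = |x| (b . u).\<close>
lemma gauss_moment_polar: "gauss_moment (b::'a::euclidean_space) j = ball_moment b j * radial_moment DIM('a) j"
proof -
  have eq: "ennreal ((b \<bullet> x)^(2*j) * exp (- ((norm x)^2)/2)) =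
      ennreal ((b \<bullet> sgn x)^(2*j)) * ennreal ((norm x)^(2*j) * exp (- ((norm x)^2)/2))" for x :: 'a
  proof -
    have "b \<bullet> x = norm x * (b \<bullet> sgn x)"
      by (cases "x = 0") (auto simp: sgn_div_norm inner_scaleR_right)
    then have "(b \<bullet> x)^(2*j) * exp (- ((norm x)^2)/2) =
        (b \<bullet> sgn x)^(2*j) * ((norm x)^(2*j) * exp (- ((norm x)^2)/2))"
      by (simp add: power_mult_distrib)
    then show ?thesis by (simp add: ennreal_mult mult.assoc)
  qed
  have "gauss_moment b j = (\<integral>\<^sup>+ x. ennreal ((b \<bullet> sgn x)^(2*j)) *
      (\<lambda>r. ennreal (r^(2*j) * exp (- (r^2)/2))) (norm x) \<partial>lborel)"
    unfolding gauss_moment_def eq by simp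
  also have "\<dots> = ball_moment b j * radial_moment DIM('a) j"
    unfolding ball_moment_def radial_moment_def
  proof (rule nn_integral_polar)
    show "ennreal ((b \<bullet> sgn (c *\<^sub>R x)) ^ (2 * j)) = ennreal ((b \<bullet> sgn x) ^ (2 * j))"
      if "c > 0" for c and x :: 'a
      using that by (simp add: sgn_scaleR)
    show "(\<integral>\<^sup>+ x. ennreal ((b \<bullet> sgn x) ^ (2 * j)) * indicator (ball 0 1) x \<partial>lborel) < \<infinity>"
      using ball_moment_finite[of b j] unfolding ball_moment_def .
  qed (measurable, measurable)
  finally show ?thesis .
qed

text \<open>The power r^(2j+K-1) of the radial density, written in the variable t = r^2.\<close>
lemma power_pair_eq_powr_square:
  fixes r :: real and K j :: nat
  assumes r: "r > 0" and K: "K \<ge> 1"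
  shows "r^(2*j) * r^(K-1) = (r^2) powr (real K/2 + real j - 1) * r"
proof -
  define e where "e = real K/2 + real j - 1"
  have sq: "r^2 = r powr 2" using r by (simp add: powr_numeral)
  have "(r^2) powr e * r = r powr (2*e) * r" unfolding sq by (simp add: powr_powr)
  also have "\<dots> = r powr (2*e + 1)" using r by (subst powr_add) simp
  also have "2*e + 1 = real (2*j + (K-1))" unfolding e_def using K by (simp add: of_nat_diff)
  also have "r powr real (2*j + (K-1)) = r^(2*j) * r^(K-1)"
    using r by (subst powr_realpow) (auto simp: power_add)
  finally show ?thesis unfolding e_def by simp
qed

text \<open>Radial Gaussian moments are Gamma values (substitution t = r^2).\<close>
lemma radial_moment_eq:
  assumes D: "D \<ge> 1"
  shows "radial_moment D j = ennreal (real D / 2 * 2 powr (real D/2 + real j) * Gamma (real D/2 + real j))"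
proof -
  define s where "s = real D/2 + real j"
  have s: "s > 0" unfolding s_def using D by simp
  note powers = power_pair_eq_powr_square[OF _ D, of _ j, folded s_def]
  define f where "f t = ennreal (real D/2) * ennreal (t powr (s-1) * exp (-((1/2)*t)))" for t :: real
  have [measurable]: "f \<in> borel_measurable borel" unfolding f_def by measurable
  have "radial_moment D j = (\<integral>\<^sup>+ r. f (r^2) * ennreal (2*r) * indicator {0<..} r \<partial>lborel)"
    unfolding radial_moment_def
  proof (intro nn_integral_cong_AE, use AE_lborel_singleton[of 0] in eventually_elim)
    case (elim r)
    show ?case
    proof (cases "r > 0")
      case True
      have "r^(2*j) * exp (- (r^2)/2) * (real D * r^(D-1)) =
          real D/2 * ((r^2) powr (s-1) * exp (-((1/2)*(r^2)))) * (2*r)"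
        using powers[OF True] by (simp add: field_simps)
      then have "ennreal (r^(2*j) * exp (- (r^2)/2)) * ennreal (real D * r^(D-1)) =
          ennreal (real D/2) * ennreal ((r^2) powr (s-1) * exp (-((1/2)*(r^2)))) * ennreal (2*r)"
        using True by (simp add: ennreal_mult[symmetric])
      then show ?thesis using True by (simp add: f_def)
    qed (use elim in \<open>auto simp: indicator_def\<close>)
  qed
  also have "\<dots> = (\<integral>\<^sup>+ t. f t * indicator {0<..} t \<partial>lborel)"
    by (rule nn_integral_subst_square) measurable
  also have "\<dots> = ennreal (real D/2) *
      (\<integral>\<^sup>+ t. ennreal (t powr (s-1) * exp (-((1/2)*t))) * indicator {0<..} t \<partial>lborel)"
    unfolding f_def by (subst nn_integral_cmult[symmetric]) (auto simp: mult.assoc)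
  also have "\<dots> = ennreal (real D/2) * ennreal (2 powr s * Gamma s)"
    using s by (subst nn_integral_Gamma_rate) (auto simp: powr_divide mult.commute)
  also have "\<dots> = ennreal (real D/2 * (2 powr s * Gamma s))"
    using Gamma_real_pos[OF s] by (intro ennreal_mult[symmetric]) auto
  finally show ?thesis unfolding s_def by (simp add: mult.assoc)
qed


text \<open>The normalised directional moment E[(b . u)^(2j)] for u uniform on the unit sphere
  of R^D, with |b| = nb.\<close>
definition dir_moment_coeff :: "nat \<Rightarrow> real \<Rightarrow> nat \<Rightarrow> real" where
  "dir_moment_coeff D nb j =
    fact (2*j) * nb^(2*j) * Gamma (real D/2) / (4^j * fact j * Gamma (real D/2 + real j))"

lemma dir_moment_coeff_nonneg: "D \<ge> 1 \<Longrightarrow> dir_moment_coeff D nb j \<ge> 0"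
  unfolding dir_moment_coeff_def by (intro divide_nonneg_pos mult_nonneg_nonneg mult_pos_pos Gamma_real_pos) auto

text \<open>Dividing the Gaussian moment by the radial moment yields the directional moment.\<close>
lemma ball_moment_eq:
  fixes b :: "'a::euclidean_space"
  shows "ball_moment b j = ball_moment b 0 * ennreal (dir_moment_coeff DIM('a) (norm b) j)"
proof -
  define D where "D = DIM('a)"
  have D: "D \<ge> 1" unfolding D_def using DIM_positive[where 'a='a] by linarith
  define G where "G = sqrt (2*pi) ^ D"
  define \<rho> where "\<rho> j = real D / 2 * 2 powr (real D/2 + real j) * Gamma (real D/2 + real j)" for j
  have \<rho>: "\<rho> j > 0" for j unfolding \<rho>_def using D by (intro mult_pos_pos Gamma_real_pos) auto
  define \<iota> where "\<iota> j = enn2real (ball_moment b j)" for j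
  have ball_\<iota>: "ball_moment b j = ennreal (\<iota> j)" for j
    unfolding \<iota>_def using ball_moment_finite[of b j] by (simp add: less_top)
  have \<iota>0: "\<iota> j \<ge> 0" for j unfolding \<iota>_def by simp
  have product: "\<iota> j * \<rho> j = G * (fact (2*j) * ((norm b)^2/2)^j / fact j)" for j
  proof -
    have "ennreal (G * (fact (2*j) * ((norm b)^2/2)^j / fact j)) = ennreal (\<iota> j) * ennreal (\<rho> j)"
      using gauss_moment_polar[of b j]
      unfolding gauss_moment_eq radial_moment_eq[OF D[unfolded D_def]] ball_\<iota>
      by (simp add: G_def \<rho>_def D_def mult.assoc)
    also have "\<dots> = ennreal (\<iota> j * \<rho> j)" using \<iota>0 \<rho> by (simp add: ennreal_mult less_imp_le)
    finally show ?thesis using \<iota>0[of j] \<rho>[of j]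
      by (subst (asm) ennreal_inj) (auto simp: G_def)
  qed
  have coeff_\<rho>: "dir_moment_coeff D (norm b) j * \<rho> j = \<rho> 0 * (fact (2*j) * ((norm b)^2/2)^j / fact j)"
  proof -
    have p: "2 powr (real D/2 + real j) = 2 powr (real D/2) * 2^j"
      by (simp add: powr_add powr_realpow)
    have g: "Gamma (real D/2 + real j) > 0" "Gamma (real D/2) > 0" using D by (auto intro: Gamma_real_pos)
    have four: "(4::real)^j = 2^j * 2^j" by (simp add: power_mult_distrib[symmetric])
    have sq: "(norm b ^ j)^2 = ((norm b)^2)^j" by (simp add: power_mult[symmetric] mult.commute)
    show ?thesis unfolding dir_moment_coeff_def \<rho>_def p four
      using g by (simp add: field_simps power_divide power_mult sq)
  qed
  have "\<iota> j * \<rho> j = (\<iota> 0 * dir_moment_coeff D (norm b) j) * \<rho> j"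
    using product[of j] product[of 0] coeff_\<rho> by (simp add: mult_ac)
  then have "\<iota> j = \<iota> 0 * dir_moment_coeff D (norm b) j" using \<rho>[of j] by simp
  then show ?thesis unfolding ball_\<iota> D_def using \<iota>0 dir_moment_coeff_nonneg[OF D, of "norm b" j]
    by (simp add: ennreal_mult D_def)
qed

section \<open>The directional exponential average\<close>

text \<open>The series \<Sum>_j (a nb/2)^(2j) \<Gamma>(K/2) / (j! \<Gamma>(K/2+j)) = E[exp (a (b . u))],
  u uniform on the sphere of R^K, |b| = nb (a normalised Bessel function).\<close>
definition dir_exp_series :: "nat \<Rightarrow> real \<Rightarrow> real \<Rightarrow> ennreal" where
  "dir_exp_series K nb a =
    (\<Sum>j. ennreal ((a * nb / 2)^(2*j) * Gamma (real K/2) / (fact j * Gamma (real K/2 + real j))))"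

text \<open>Under the reflection x \<mapsto> -x the ball is invariant, so exp may be replaced by cosh.\<close>
lemma ball_exp_eq_cosh:
  fixes b :: "'a::euclidean_space" and a :: real
  shows "(\<integral>\<^sup>+ x. ennreal (exp (a * (b \<bullet> sgn x))) * indicator (ball 0 1) x \<partial>lborel) =
     (\<integral>\<^sup>+ x. ennreal (cosh (a * (b \<bullet> sgn x))) * indicator (ball (0::'a) 1) x \<partial>lborel)"
proof -
  define E where "E a = (\<integral>\<^sup>+ x. ennreal (exp (a * (b \<bullet> sgn x))) * indicator (ball (0::'a) 1) x \<partial>lborel)" for a
  have reflect: "E (-a) = E a"
  proof -
    have "E a = ennreal (\<bar>-1\<bar>^DIM('a)) * (\<integral>\<^sup>+ x. ennreal (exp (a * (b \<bullet> sgn ((-1) *\<^sub>R x)))) *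
        indicator (ball (0::'a) 1) ((-1) *\<^sub>R x) \<partial>lborel)"
      unfolding E_def by (rule nn_integral_lborel_scale) auto
    then show ?thesis unfolding E_def by (simp add: sgn_minus indicator_def)
  qed
  have "(\<integral>\<^sup>+ x. ennreal (cosh (a * (b \<bullet> sgn x))) * indicator (ball (0::'a) 1) x \<partial>lborel) =
     (\<integral>\<^sup>+ x. ennreal (1/2) * (ennreal (exp (a * (b \<bullet> sgn x))) * indicator (ball (0::'a) 1) x +
                             ennreal (exp ((-a) * (b \<bullet> sgn x))) * indicator (ball (0::'a) 1) x) \<partial>lborel)"
  proof (intro nn_integral_cong)
    fix x :: 'a
    have "ennreal (cosh (a * (b \<bullet> sgn x))) =
        ennreal ((1/2) * (exp (a * (b \<bullet> sgn x)) + exp ((-a) * (b \<bullet> sgn x))))"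
      by (simp add: cosh_def)
    also have "\<dots> = ennreal (1/2) * (ennreal (exp (a * (b \<bullet> sgn x))) + ennreal (exp ((-a) * (b \<bullet> sgn x))))"
      by (subst ennreal_mult) auto
    finally
    show "ennreal (cosh (a * (b \<bullet> sgn x))) * indicator (ball (0::'a) 1) x =
       ennreal (1/2) * (ennreal (exp (a * (b \<bullet> sgn x))) * indicator (ball (0::'a) 1) x +
                             ennreal (exp ((-a) * (b \<bullet> sgn x))) * indicator (ball (0::'a) 1) x)"
      by (simp add: distrib_right mult.assoc)
  qed
  also have "\<dots> = ennreal (1/2) * (E a + E (-a))"
    unfolding E_def by (subst nn_integral_cmult) (auto simp: nn_integral_add)
  also note reflect
  also have "ennreal (1/2) * (E a + E a) = (ennreal (1/2) * 2) * E a"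
    by (simp add: mult_2[symmetric] mult.assoc)
  also have "ennreal (1/2) * 2 = ennreal ((1/2) * 2)" by (subst ennreal_mult) auto
  also have "ennreal ((1/2) * 2) = 1" by simp
  finally show ?thesis unfolding E_def by simp
qed

text \<open>Expanding cosh and integrating term by term over the ball gives the series.\<close>
lemma ball_exp_series:
  fixes b :: "'a::euclidean_space" and a :: real
  shows "(\<integral>\<^sup>+ x. ennreal (exp (a * (b \<bullet> sgn x))) * indicator (ball 0 1) x \<partial>lborel) =
     emeasure lborel (ball (0::'a) 1) * dir_exp_series DIM('a) (norm b) a"
proof -
  have "(\<integral>\<^sup>+ x. ennreal (exp (a * (b \<bullet> sgn x))) * indicator (ball 0 1) x \<partial>lborel) =
      (\<integral>\<^sup>+ x. (\<Sum>j. ennreal (a^(2*j) / fact (2*j)) * (ennreal ((b \<bullet> sgn x)^(2*j)) *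
        indicator (ball (0::'a) 1) x)) \<partial>lborel)"
    unfolding ball_exp_eq_cosh
  proof (intro nn_integral_cong)
    fix x :: 'a
    have "ennreal (cosh (a * (b \<bullet> sgn x))) =
        (\<Sum>j. ennreal (a^(2*j) / fact (2*j)) * ennreal ((b \<bullet> sgn x)^(2*j)))"
      unfolding cosh_series_ennreal
      by (intro suminf_cong) (simp add: ennreal_mult[symmetric] power_mult_distrib)
    then show "ennreal (cosh (a * (b \<bullet> sgn x))) * indicator (ball 0 1) x =
      (\<Sum>j. ennreal (a^(2*j) / fact (2*j)) * (ennreal ((b \<bullet> sgn x)^(2*j)) * indicator (ball (0::'a) 1) x))"
      by (simp add: mult.assoc[symmetric])
  qed
  also have "\<dots> = (\<Sum>j. (\<integral>\<^sup>+ x. ennreal (a^(2*j) / fact (2*j)) *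
      (ennreal ((b \<bullet> sgn x)^(2*j)) * indicator (ball (0::'a) 1) x) \<partial>lborel))"
    by (rule nn_integral_suminf) measurable
  also have "\<dots> = (\<Sum>j. ennreal (a^(2*j) / fact (2*j)) * ball_moment b j)"
    unfolding ball_moment_def by (intro suminf_cong nn_integral_cmult) measurable
  also have "\<dots> = (\<Sum>j. ball_moment b 0 * ennreal ((a * norm b / 2)^(2*j) * Gamma (real DIM('a)/2) /
      (fact j * Gamma (real DIM('a)/2 + real j))))"
  proof (intro suminf_cong)
    fix j
    have four: "(4::real)^j = 2^(2*j)" by (simp add: power_mult)
    have "a^(2*j) / fact (2*j) * dir_moment_coeff DIM('a) (norm b) j =
        (a * norm b / 2)^(2*j) * Gamma (real DIM('a)/2) / (fact j * Gamma (real DIM('a)/2 + real j))"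
      unfolding dir_moment_coeff_def four by (simp add: power_mult_distrib power_divide field_simps)
    moreover have "a^(2*j) / fact (2*j) \<ge> 0" by simp
    moreover have "dir_moment_coeff DIM('a) (norm b) j \<ge> 0"
      using DIM_positive[where 'a='a] by (intro dir_moment_coeff_nonneg) auto
    ultimately show "ennreal (a^(2*j) / fact (2*j)) * ball_moment b j = ball_moment b 0 *
        ennreal ((a * norm b / 2)^(2*j) * Gamma (real DIM('a)/2) / (fact j * Gamma (real DIM('a)/2 + real j)))"
      by (subst ball_moment_eq) (simp add: ennreal_mult[symmetric] mult_ac)
  qed
  finally show ?thesis unfolding ball_moment_0 dir_exp_series_def by simp
qed

lemma emeasure_lborel_unit_ball_nonzero: "emeasure lborel (ball (0::'a::euclidean_space) 1) \<noteq> 0"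
  using content_ball_pos[of 1 "0::'a"] emeasure_lborel_ball_finite[of "0::'a" 1]
  by (simp add: emeasure_eq_ennreal_measure)

text \<open>The series converges: the integrand is bounded by exp(|a| |b|) on the unit ball.\<close>
lemma dir_exp_series_finite:
  fixes b :: "'a::euclidean_space"
  shows "dir_exp_series DIM('a) (norm b) a < \<infinity>"
proof -
  define V where "V = emeasure lborel (ball (0::'a) 1)"
  have "V * dir_exp_series DIM('a) (norm b) a =
      (\<integral>\<^sup>+ x. ennreal (exp (a * (b \<bullet> sgn x))) * indicator (ball 0 1) x \<partial>lborel)"
    unfolding V_def ball_exp_series ..
  also have "\<dots> \<le> (\<integral>\<^sup>+ x. ennreal (exp (\<bar>a\<bar> * norm b)) * indicator (ball (0::'a) 1) x \<partial>lborel)"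
  proof (rule nn_integral_mono)
    fix x :: 'a
    have "a * (b \<bullet> sgn x) \<le> \<bar>a\<bar> * \<bar>b \<bullet> sgn x\<bar>" by (metis abs_ge_self abs_mult)
    also have "\<bar>b \<bullet> sgn x\<bar> \<le> norm b * norm (sgn x)" by (rule Cauchy_Schwarz_ineq2)
    also have "\<dots> \<le> norm b" by (simp add: norm_sgn)
    finally have "a * (b \<bullet> sgn x) \<le> \<bar>a\<bar> * norm b" by (simp add: mult_left_mono)
    then show "ennreal (exp (a * (b \<bullet> sgn x))) * indicator (ball 0 1) x \<le>
        ennreal (exp (\<bar>a\<bar> * norm b)) * indicator (ball 0 1) x"
      by (intro mult_right_mono ennreal_leI) auto
  qed
  also have "\<dots> = ennreal (exp (\<bar>a\<bar> * norm b)) * V"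
    unfolding V_def by (simp add: nn_integral_cmult_indicator)
  also have "\<dots> < \<infinity>"
    using emeasure_lborel_ball_finite[of "0::'a" 1] unfolding V_def
    by (simp add: ennreal_mult_less_top less_top)
  finally have "V * dir_exp_series DIM('a) (norm b) a < \<infinity>" .
  moreover have "V \<noteq> 0"
    unfolding V_def by (rule emeasure_lborel_unit_ball_nonzero)
  ultimately show ?thesis by (auto simp: ennreal_mult_less_top)
qed


section \<open>The likelihood averaged over a sphere\<close>

text \<open>On the sphere |b| = r the likelihood depends on b only through bhat . b, so its sphere
  average is an exponential directional average.\<close>
lemma lik_r_sphere_average:
  fixes sg y :: "real^'n" and A :: "real^'k^'n" and S :: "real^'k^'k" and lam :: "real^'k"
  shows "lik_r sg A y S lam r = Csigma sg * exp (- (real CARD('n)/2) * z2mean sg y) *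
     (exp (- (real CARD('n)/2) * r^2) *
      enn2real (dir_exp_series CARD('k) (norm (bhat sg A y S lam)) (real CARD('n) * r)))"
proof -
  define U where "U = uniform_measure lborel (ball (0::real^'k) 1)"
  define bh where "bh = bhat sg A y S lam"
  define N where "N = real CARD('n)"
  define c where "c = Csigma sg * exp (- (N/2) * z2mean sg y) * exp (- (N/2) * r^2)"
  have [measurable]: "lik_b sg A y S lam \<in> borel_measurable borel" unfolding lik_b_def by measurable
  have on_sphere: "lik_b sg A y S lam (r *\<^sub>R sgn x) = c * exp ((N * r) * (bh \<bullet> sgn x))"
    if x: "x \<noteq> 0" for x :: "real^'k"
  proof -
    have "(norm (r *\<^sub>R sgn x))^2 = r^2" using x by (simp add: norm_sgn power_mult_distrib)
    then have "- (N/2) * (z2mean sg y + (norm (r *\<^sub>R sgn x))^2 - 2 * (bh \<bullet> (r *\<^sub>R sgn x)))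
        = - (N/2) * z2mean sg y + (- (N/2) * r^2) + (N * r) * (bh \<bullet> sgn x)"
      by (simp add: algebra_simps)
    then have "exp (- (N/2) * (z2mean sg y + (norm (r *\<^sub>R sgn x))^2 - 2 * (bh \<bullet> (r *\<^sub>R sgn x))))
        = exp (- (N/2) * z2mean sg y) * exp (- (N/2) * r^2) * exp ((N * r) * (bh \<bullet> sgn x))"
      by (simp only: exp_add)
    then show ?thesis
      unfolding lik_b_def c_def bh_def[symmetric] N_def[symmetric] by (simp only: mult.assoc)
  qed
  have "lik_r sg A y S lam r = (\<integral>x. lik_b sg A y S lam (r *\<^sub>R sgn x) \<partial>U)"
    unfolding lik_r_def sphere_measure_def U_def sgn_div_norm by (subst integral_distr) auto
  also have "\<dots> = (\<integral>x. c * exp ((N * r) * (bh \<bullet> sgn x)) \<partial>U)"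
  proof (rule integral_cong_AE)
    have "AE x in U. x \<noteq> 0"
      unfolding U_def by (rule AE_uniform_measureI)
        (use AE_lborel_singleton[of "0::real^'k"] in \<open>auto elim: eventually_mono\<close>)
    then show "AE x in U. lik_b sg A y S lam (r *\<^sub>R sgn x) = c * exp ((N * r) * (bh \<bullet> sgn x))"
      by (rule eventually_mono) (rule on_sphere)
  qed (auto simp: U_def)
  also have "\<dots> = c * enn2real (\<integral>\<^sup>+x. ennreal (exp ((N * r) * (bh \<bullet> sgn x))) \<partial>U)"
    unfolding integral_mult_right_zero unfolding U_def by (subst integral_eq_nn_integral) auto
  also have "(\<integral>\<^sup>+x. ennreal (exp ((N * r) * (bh \<bullet> sgn x))) \<partial>U) =
      (\<integral>\<^sup>+x. ennreal (exp ((N * r) * (bh \<bullet> sgn x))) * indicator (ball 0 1) x \<partial>lborel) /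
        emeasure lborel (ball (0::real^'k) 1)"
    unfolding U_def by (rule nn_integral_uniform_measure) auto
  also have "\<dots> = dir_exp_series CARD('k) (norm bh) (N * r)"
    unfolding ball_exp_series
    using emeasure_lborel_unit_ball_nonzero[where 'a="real^'k"] emeasure_lborel_ball_finite[of "0::real^'k" 1]
    by (subst mult.commute) (simp add: ennreal_mult_divide_eq)
  finally show ?thesis unfolding c_def bh_def N_def by (simp add: mult.assoc)
qed

section \<open>The radial prior integrals\<close>

lemma hyperU_integrand_bound:
  fixes a b x :: real
  assumes a: "a > 0" and x: "x > 0" and b: "b \<le> a + 1"
  shows "(\<integral>\<^sup>+ t. ennreal (exp (- x * t) * t powr (a - 1) * (1 + t) powr (b - a - 1)) *
    indicator {0<..} t \<partial>lborel) \<le> ennreal (Gamma a / x powr a)"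
proof -
  have "(\<integral>\<^sup>+ t. ennreal (exp (- x * t) * t powr (a - 1) * (1 + t) powr (b - a - 1)) *
      indicator {0<..} t \<partial>lborel) \<le>
      (\<integral>\<^sup>+ t. ennreal (t powr (a-1) * exp (-(x*t))) * indicator {0<..} t \<partial>lborel)"
  proof (rule nn_integral_mono)
    fix t :: real
    show "ennreal (exp (- x * t) * t powr (a - 1) * (1 + t) powr (b - a - 1)) * indicator {0<..} t \<le>
        ennreal (t powr (a-1) * exp (-(x*t))) * indicator {0<..} t"
    proof (cases "t > 0")
      case True
      have "(1 + t) powr (b - a - 1) \<le> 1 powr (b - a - 1)"
        using True b by (intro powr_mono2') auto
      then have "exp (- x * t) * t powr (a - 1) * (1 + t) powr (b - a - 1) \<le> t powr (a-1) * exp (-(x*t))"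
        by (simp add: mult_left_le mult.commute mult.left_commute)
      then show ?thesis by (intro mult_right_mono ennreal_leI) auto
    qed auto
  qed
  also have "\<dots> = ennreal (Gamma a / x powr a)" using a x by (rule nn_integral_Gamma_rate)
  finally show ?thesis .
qed

lemma hyperU_nn_integral:
  fixes a b x :: real
  assumes a: "a > 0" and x: "x > 0" and b: "b \<le> a + 1"
  shows "(\<integral>\<^sup>+ t. ennreal (exp (- x * t) * t powr (a - 1) * (1 + t) powr (b - a - 1)) *
      indicator {0<..} t \<partial>lborel) = ennreal (Gamma a * hyperU a b x)"
    and "hyperU a b x \<ge> 0" and "hyperU a b x \<le> x powr (-a)"
proof -
  define f where "f t = exp (- x * t) * t powr (a - 1) * (1 + t) powr (b - a - 1)" for t :: real
  define I where "I = (\<integral>\<^sup>+ t. ennreal (f t) * indicator {0<..} t \<partial>lborel)"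
  have I_le: "I \<le> ennreal (Gamma a / x powr a)"
    unfolding I_def f_def using a x b by (rule hyperU_integrand_bound)
  then have I_fin: "I < \<infinity>" using le_less_trans by fastforce
  have "(LBINT t:{0<..}. f t) = enn2real I"
    unfolding set_lebesgue_integral_def I_def
    by (subst integral_eq_nn_integral) (auto simp: f_def indicator_def intro!: arg_cong[where f=enn2real] nn_integral_cong)
  then have hU: "hyperU a b x = enn2real I / Gamma a"
    unfolding hyperU_def f_def by simp
  have Ga: "Gamma a > 0" using a by (rule Gamma_real_pos)
  have "I = ennreal (enn2real I)" using I_fin by (simp add: less_top)
  also have "enn2real I = Gamma a * hyperU a b x" unfolding hU using Ga by simp
  finally show "(\<integral>\<^sup>+ t. ennreal (exp (- x * t) * t powr (a - 1) * (1 + t) powr (b - a - 1)) *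
      indicator {0<..} t \<partial>lborel) = ennreal (Gamma a * hyperU a b x)" unfolding I_def f_def .
  show "hyperU a b x \<ge> 0" unfolding hU using Ga by simp
  have "enn2real I \<le> Gamma a / x powr a"
    using I_le I_fin Ga x by (simp add: enn2real_le)
  then show "hyperU a b x \<le> x powr (-a)"
    unfolding hU using Ga x by (simp add: field_simps powr_minus)
qed

lemma pZS_nonneg: "K \<ge> 1 \<Longrightarrow> r \<ge> 0 \<Longrightarrow> pZS K r \<ge> 0"
  unfolding pZS_def
  by (intro mult_nonneg_nonneg divide_nonneg_nonneg less_imp_le[OF Gamma_real_pos]) auto

text \<open>Gaussian-weighted even moments of the prior: the substitution t = r^2 turns them into
  confluent hypergeometric functions,
  \<integral>_0^\<infinity> e^(-x r^2) r^(2j) p'_ZS(r) dr = c_K \<Gamma>(K/2+j) U(K/2+j; 1/2+j; x).\<close>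
lemma pZS_gauss_moment:
  fixes x :: real and K j :: nat
  assumes K: "K \<ge> 1" and x: "x > 0"
  shows "(\<integral>\<^sup>+ r. ennreal (exp (- x * r^2) * r^(2*j) * pZS K r) * indicator {0<..} r \<partial>lborel) =
     ennreal (Gamma ((real K + 1) / 2) / (Gamma (real K / 2) * Gamma (1 / 2)) *
       (Gamma (real K/2 + real j) * hyperU (real K/2 + real j) (1/2 + real j) x))"
proof -
  define P where "P = Gamma ((real K + 1) / 2) / (Gamma (real K / 2) * Gamma (1 / 2))"
  have P: "P > 0" unfolding P_def using K by (intro divide_pos_pos mult_pos_pos Gamma_real_pos) auto
  define \<alpha> where "\<alpha> = real K/2 + real j"
  define \<beta> where "\<beta> = 1/2 + real j"
  have \<alpha>: "\<alpha> > 0" unfolding \<alpha>_def using K by simp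
  have \<beta>\<alpha>: "\<beta> - \<alpha> - 1 = - ((real K + 1) / 2)" unfolding \<alpha>_def \<beta>_def by (simp add: field_simps)
  have \<beta>: "\<beta> \<le> \<alpha> + 1" unfolding \<alpha>_def \<beta>_def by simp
  define g where "g t = ennreal (exp (- x * t) * t powr (\<alpha> - 1) * (1 + t) powr (\<beta> - \<alpha> - 1))" for t :: real
  have [measurable]: "g \<in> borel_measurable borel" unfolding g_def by measurable
  have in_t: "exp (- x * r^2) * r^(2*j) * pZS K r =
      P * ((exp (- x * r^2) * (r^2) powr (\<alpha> - 1) * (1 + r^2) powr (\<beta> - \<alpha> - 1)) * (2*r))"
    if r: "r > 0" for r :: real
  proof -
    have "1 / (1 + r^2) powr ((real K + 1) / 2) = (1 + r^2) powr (\<beta> - \<alpha> - 1)"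
      unfolding \<beta>\<alpha> by (simp add: powr_minus_divide)
    moreover have "exp (- x * r^2) * r^(2*j) * pZS K r =
        P * (exp (- x * r^2) * (r^(2*j) * r^(K-1)) * (1 / (1 + r^2) powr ((real K + 1) / 2)) * 2)"
      unfolding pZS_def P_def by (simp add: field_simps)
    ultimately show ?thesis
      unfolding power_pair_eq_powr_square[OF r K] \<alpha>_def by (simp add: mult_ac)
  qed
  have "(\<integral>\<^sup>+ r. ennreal (exp (- x * r^2) * r^(2*j) * pZS K r) * indicator {0<..} r \<partial>lborel) =
        (\<integral>\<^sup>+ r. ennreal P * (g (r^2) * ennreal (2*r) * indicator {0<..} r) \<partial>lborel)"
  proof (intro nn_integral_cong)
    fix r :: real
    show "ennreal (exp (- x * r^2) * r^(2*j) * pZS K r) * indicator {0<..} r =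
        ennreal P * (g (r^2) * ennreal (2*r) * indicator {0<..} r)"
    proof (cases "r > 0")
      case True
      have "0 \<le> exp (- x * r^2) * (r^2) powr (\<alpha> - 1) * (1 + r^2) powr (\<beta> - \<alpha> - 1)" by simp
      then show ?thesis
        unfolding in_t[OF True] g_def using True P by (simp add: ennreal_mult mult.assoc)
    qed simp
  qed
  also have "\<dots> = ennreal P * (\<integral>\<^sup>+ r. g (r^2) * ennreal (2*r) * indicator {0<..} r \<partial>lborel)"
    by (rule nn_integral_cmult) measurable
  also have "(\<integral>\<^sup>+ r. g (r^2) * ennreal (2*r) * indicator {0<..} r \<partial>lborel) =
      (\<integral>\<^sup>+ t. g t * indicator {0<..} t \<partial>lborel)"
    by (rule nn_integral_subst_square) measurable
  also have "\<dots> = ennreal (Gamma \<alpha> * hyperU \<alpha> \<beta> x)"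
    unfolding g_def by (rule hyperU_nn_integral(1)[OF \<alpha> x \<beta>])
  finally show ?thesis
    unfolding P_def[symmetric] \<alpha>_def[symmetric] \<beta>_def[symmetric]
    using P Gamma_real_pos[OF \<alpha>] hyperU_nn_integral(2)[OF \<alpha> x \<beta>]
    by (subst ennreal_mult) auto
qed


section \<open>Term-by-term integration against the prior\<close>

text \<open>The resulting series converges, since U(a;b;x) \<le> x^(-a) gives an exponential majorant.\<close>
lemma hyperU_series_summable:
  fixes k x w :: real
  assumes k: "k > 0" and x: "x > 0" and w: "w \<ge> 0"
  shows "summable (\<lambda>j. 1 / fact j * w^j * hyperU (k + real j) (1/2 + real j) x)"
proof (rule summable_comparison_test[where g="\<lambda>j. x powr (-k) * ((w/x)^j / fact j)"])
  show "summable (\<lambda>j. x powr (-k) * ((w/x)^j / fact j))"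
    using summable_exp[of "w/x"] by (intro summable_mult) (simp only: divide_inverse_commute)
  show "\<exists>M. \<forall>j\<ge>M. norm (1 / fact j * w^j * hyperU (k + real j) (1/2 + real j) x) \<le>
      x powr (-k) * ((w/x)^j / fact j)"
  proof (intro exI allI impI)
    fix j :: nat
    have b: "1/2 + real j \<le> (k + real j) + 1" using k by simp
    have U: "0 \<le> hyperU (k + real j) (1/2 + real j) x"
        "hyperU (k + real j) (1/2 + real j) x \<le> x powr (-(k + real j))"
      using hyperU_nn_integral(2,3)[of "k + real j" x "1/2 + real j"] k x b by auto
    have "x powr (-(real j)) = (1/x)^j"
      using x by (simp add: powr_minus powr_realpow divide_inverse flip: power_inverse)
    moreover have "x powr (-(k + real j)) = x powr (-k) * x powr (-(real j))"
      by (simp add: powr_add[symmetric])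
    ultimately have "x powr (-(k + real j)) = x powr (-k) * (1/x)^j"
      by simp
    then have "1 / fact j * w^j * hyperU (k + real j) (1/2 + real j) x \<le> 1 / fact j * w^j * (x powr (-k) * (1/x)^j)"
      using U w by (intro mult_left_mono) auto
    also have "\<dots> = x powr (-k) * ((w/x)^j / fact j)"
      by (simp add: power_divide mult_ac)
    finally show "norm (1 / fact j * w^j * hyperU (k + real j) (1/2 + real j) x) \<le>
        x powr (-k) * ((w/x)^j / fact j)"
      using U w by simp
  qed
qed

text \<open>One term of the series: the j-th directional coefficient times the j-th
  Gaussian-weighted prior moment (using \<Gamma>(1/2) = \<surd>\<pi>).\<close>
lemma prior_average_term:
  fixes K j :: nat and N nb :: real
  assumes K: "K \<ge> 1" and N: "N > 0"
  shows "ennreal ((N * nb / 2)^(2*j) * Gamma (real K/2) / (fact j * Gamma (real K/2 + real j))) *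
      (\<integral>\<^sup>+ r. ennreal (exp (- (N/2) * r^2) * r^(2*j) * pZS K r) * indicator {0<..} r \<partial>lborel) =
    ennreal (Gamma ((real K + 1) / 2) / sqrt pi *
      (1 / fact j * (N^2 * nb^2 / 4)^j * hyperU (real K/2 + real j) (1/2 + real j) (N/2)))"
proof -
  define U where "U = hyperU (real K/2 + real j) (1/2 + real j) (N/2)"
  have U: "U \<ge> 0" unfolding U_def using N K by (intro hyperU_nn_integral(2)) auto
  have g: "Gamma (real K/2) > 0" "Gamma (real K/2 + real j) > 0" "Gamma ((real K + 1)/2) > 0"
    using K by (auto intro: Gamma_real_pos)
  have pw: "(N * nb / 2)^(2*j) = (N^2 * nb^2 / 4)^j"
    by (simp add: power_mult power_mult_distrib power_divide)
  have "(\<integral>\<^sup>+ r. ennreal (exp (- (N/2) * r^2) * r^(2*j) * pZS K r) * indicator {0<..} r \<partial>lborel) =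
      ennreal (Gamma ((real K + 1) / 2) / (Gamma (real K / 2) * Gamma (1 / 2)) * (Gamma (real K/2 + real j) * U))"
    unfolding U_def using pZS_gauss_moment[OF K, of "N/2" j] N by simp
  then show ?thesis
    using g U unfolding pw U_def[symmetric] Gamma_one_half_real
    by (simp add: ennreal_mult[symmetric] field_simps)
qed

text \<open>Integrating the directional series against the Gaussian-weighted prior term by term
  (monotone convergence: all terms are nonnegative).\<close>
lemma prior_average_nn_series:
  fixes K :: nat and N nb :: real
  assumes K: "K \<ge> 1" and N: "N > 0" and nb: "nb \<ge> 0"
  and fin: "\<And>r. dir_exp_series K nb (N * r) < \<infinity>"
  shows "(\<integral>\<^sup>+ r. ennreal (exp (- (N/2) * r^2) * enn2real (dir_exp_series K nb (N * r)) * pZS K r) *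
      indicator {0<..} r \<partial>lborel) =
    (\<Sum>j. ennreal (Gamma ((real K + 1) / 2) / sqrt pi *
      (1 / fact j * (N^2 * nb^2 / 4)^j * hyperU (real K/2 + real j) (1/2 + real j) (N/2))))"
proof -
  define co where "co j = (N * nb / 2)^(2*j) * Gamma (real K/2) / (fact j * Gamma (real K/2 + real j))" for j
  define m where "m j r = ennreal (exp (- (N/2) * r^2) * r^(2*j) * pZS K r) * indicator {0<..} r" for j r
  have co: "co j \<ge> 0" for j unfolding co_def using K
    by (intro mult_nonneg_nonneg divide_nonneg_nonneg less_imp_le[OF Gamma_real_pos]) auto
  have [measurable]: "m j \<in> borel_measurable borel" for j unfolding m_def pZS_def by measurable
  have expand: "ennreal (exp (- (N/2) * r^2) * enn2real (dir_exp_series K nb (N * r)) * pZS K r) *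
      indicator {0<..} r = (\<Sum>j. ennreal (co j) * m j r)" for r
  proof (cases "r > 0")
    case True
    have pz: "pZS K r \<ge> 0" using pZS_nonneg[OF K] True by simp
    have "ennreal (exp (- (N/2) * r^2) * enn2real (dir_exp_series K nb (N * r)) * pZS K r) =
        ennreal (exp (- (N/2) * r^2) * pZS K r) * dir_exp_series K nb (N * r)"
      using fin[of r] pz by (simp add: ennreal_mult less_top mult_ac)
    also have "\<dots> = (\<Sum>j. ennreal (co j) * m j r)"
      unfolding dir_exp_series_def ennreal_suminf_cmult[symmetric]
    proof (intro suminf_cong)
      fix j
      have "(N * r * nb / 2)^(2*j) = (N * nb / 2)^(2*j) * r^(2*j)"
        by (simp add: power_mult_distrib[symmetric] mult_ac)
      then have "exp (- (N/2) * r^2) * pZS K r * ((N * r * nb / 2)^(2*j) * Gamma (real K/2) /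
          (fact j * Gamma (real K/2 + real j))) = co j * (exp (- (N/2) * r^2) * r^(2*j) * pZS K r)"
        unfolding co_def by (simp add: field_simps)
      then show "ennreal (exp (- (N/2) * r^2) * pZS K r) * ennreal ((N * r * nb / 2)^(2*j) * Gamma (real K/2) /
          (fact j * Gamma (real K/2 + real j))) = ennreal (co j) * m j r"
        using True co[of j] pz K
        by (simp add: m_def ennreal_mult[symmetric] Gamma_real_pos less_imp_le)
    qed
    finally show ?thesis using True by simp
  qed (simp add: m_def)
  have term_integral: "ennreal (co j) * (\<integral>\<^sup>+ r. m j r \<partial>lborel) = ennreal (Gamma ((real K + 1) / 2) / sqrt pi *
      (1 / fact j * (N^2 * nb^2 / 4)^j * hyperU (real K/2 + real j) (1/2 + real j) (N/2)))" for j
    unfolding co_def m_def by (rule prior_average_term[OF K N])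
  have "(\<integral>\<^sup>+ r. ennreal (exp (- (N/2) * r^2) * enn2real (dir_exp_series K nb (N * r)) * pZS K r) *
      indicator {0<..} r \<partial>lborel) = (\<Sum>j. (\<integral>\<^sup>+ r. ennreal (co j) * m j r \<partial>lborel))"
    unfolding expand by (rule nn_integral_suminf) measurable
  also have "\<dots> = (\<Sum>j. ennreal (co j) * (\<integral>\<^sup>+ r. m j r \<partial>lborel))"
    by (intro suminf_cong nn_integral_cmult) measurable
  finally show ?thesis unfolding term_integral .
qed

text \<open>The same identity for the Lebesgue integral of real functions: both sides are finite.\<close>
lemma prior_average_integral:
  fixes K :: nat and N nb :: real
  assumes K: "K \<ge> 1" and N: "N > 0" and nb: "nb \<ge> 0"
  and fin: "\<And>r. dir_exp_series K nb (N * r) < \<infinity>"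
  shows "(LBINT r:{0<..}. exp (- (N/2) * r^2) * enn2real (dir_exp_series K nb (N * r)) * pZS K r) =
    Gamma ((real K + 1) / 2) / sqrt pi *
      (\<Sum>j. 1 / fact j * (N^2 * nb^2 / 4)^j * hyperU (real K/2 + real j) (1/2 + real j) (N/2))"
proof -
  define F where "F r = exp (- (N/2) * r^2) * enn2real (dir_exp_series K nb (N * r)) * pZS K r" for r
  define P where "P = Gamma ((real K + 1) / 2) / sqrt pi"
  define s where "s j = 1 / fact j * (N^2 * nb^2 / 4)^j * hyperU (real K/2 + real j) (1/2 + real j) (N/2)" for j
  have P: "P \<ge> 0" unfolding P_def using Gamma_real_pos[of "(real K + 1) / 2"] by simp
  have s: "s j \<ge> 0" for j
    unfolding s_def using hyperU_nn_integral(2)[of "real K/2 + real j" "N/2" "1/2 + real j"] K N by simp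
  have summable: "summable s"
    unfolding s_def using hyperU_series_summable[of "real K/2" "N/2" "N^2 * nb^2 / 4"] K N by simp
  have F: "F r \<ge> 0" if "r > 0" for r
    unfolding F_def using pZS_nonneg[OF K] that by simp
  have [measurable]: "F \<in> borel_measurable borel"
    unfolding F_def dir_exp_series_def pZS_def by measurable
  have "(LBINT r:{0<..}. F r) = enn2real (\<integral>\<^sup>+ r. ennreal (F r) * indicator {0<..} r \<partial>lborel)"
    unfolding set_lebesgue_integral_def using F
    by (subst integral_eq_nn_integral) (auto simp: indicator_def intro!: arg_cong[where f=enn2real] nn_integral_cong)
  also have "\<dots> = enn2real (\<Sum>j. ennreal (P * s j))"
    unfolding F_def s_def P_def prior_average_nn_series[OF K N nb fin] ..
  also have "(\<Sum>j. ennreal (P * s j)) = ennreal (\<Sum>j. P * s j)"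
    using s P summable by (intro suminf_ennreal2 summable_mult) auto
  also have "(\<Sum>j. P * s j) = P * (\<Sum>j. s j)"
    using summable by (rule suminf_mult)
  finally show ?thesis
    using P s summable unfolding F_def P_def s_def by (simp add: suminf_nonneg)
qed

theorem mainTheorem13:
  fixes sg y :: "real^'n" and A :: "real^'k^'n" and S :: "real^'k^'k" and lam :: "real^'k"
  assumes sigma_pos: "\<And>n. sg $ n > 0"
    and full_rank: "rank (Xmat sg A) = CARD('k)"
    and S_orth: "orthogonal_matrix S"
    and H_decomp: "Hmat sg A = S ** diag_mat lam ** transpose S"
  shows "(LBINT r:{0<..}. lik_r sg A y S lam r * pZS CARD('k) r) =
     Csigma sg * exp (- real CARD('n) * z2mean sg y / 2) / sqrt pi
       * Gamma ((real CARD('k) + 1) / 2)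
       * (\<Sum>j. 1 / fact j * ((real CARD('n))^2 * (norm (bhat sg A y S lam))^2 / 4) ^ j
              * hyperU (real CARD('k) / 2 + real j) (1 / 2 + real j) (real CARD('n) / 2))"
proof -
  define K where "K = CARD('k)"
  define N where "N = real CARD('n)"
  define nb where "nb = norm (bhat sg A y S lam)"
  have K: "K \<ge> 1" and N: "N > 0" and nb: "nb \<ge> 0"
    unfolding K_def N_def nb_def using card_ge_0_finite[of "UNIV::'k set"] by auto
  have fin: "dir_exp_series K nb (N * r) < \<infinity>" for r
    using dir_exp_series_finite[where 'a="real^'k"] unfolding K_def nb_def by simp
  have "(LBINT r:{0<..}. lik_r sg A y S lam r * pZS CARD('k) r) =
      Csigma sg * exp (- (N/2) * z2mean sg y) *
        (LBINT r:{0<..}. exp (- (N/2) * r^2) * enn2real (dir_exp_series K nb (N * r)) * pZS K r)"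
    unfolding lik_r_sphere_average N_def K_def nb_def by (simp add: mult.assoc)
  also note prior_average_integral[OF K N nb fin]
  finally show ?thesis
    unfolding N_def K_def nb_def by (simp add: mult_ac)
qed

end
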